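(* The probability that the greedy random walk on $\mathbb{Z}^2$ with rule $\mathcal{R}_{\mathrm{RAND}}$, started at the origin, returns to the origin at least once equals the probability that the particle in the planar mirror model, started at the origin with a uniformly random initial direction, returns to the origin.
   Context: A greedy random walk (GRW) on a connected locally finite graph $G=(V,E)$ started at $v_0$: $X_0=v_0$; with $H_t=\{\{X_{s-1},X_s\}:0<s\le t\}$ and $J_t(v)=\{e\in E: v\in e, e\notin H_t\}$, if $J_t(X_t)\ne\emptyset$ then $X_{t+1}$ is chosen by the rule $\mathcal{R}_{\mathrm{RAND}}$: uniformly at random among the endpoints (other than $X_t$) of the edges in $J_t(X_t)$; if $J_t(X_t)=\emptyset$ then $X_{t+1}$ is a uniformly random neighbor of $X_t$. Planar mirror model: independently at each vertex of $\mathbb{Z}^2$, place a two-sided mirror along one of the two diagonal directions (each with probability $1/3$), or no mirror (probability $1/3$). A particle moves along the edges of $\mathbb{Z}^2$ one unit per step; at a vertex with no mirror it continues straight, and at a vertex with a mirror it is deflected by the law of reflection (turning left or right by $90^\circ$ according to the mirror's orientation). *)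

theory Defs
  imports "HOL-Probability.Probability"
begin

datatype dir = E | N | W | S

lemma UNIV_dir: "(UNIV :: dir set) = {E, N, W, S}"
  using dir.exhaust by blast

instance dir :: finite
  by standard (simp add: UNIV_dir)

fun dvec :: "dir \<Rightarrow> int \<times> int" where
  "dvec E = (1, 0)" | "dvec N = (0, 1)" | "dvec W = (-1, 0)" | "dvec S = (0, -1)"

definition mv :: "int \<times> int \<Rightarrow> dir \<Rightarrow> int \<times> int" where
  "mv p d = (fst p + fst (dvec d), snd p + snd (dvec d))"

(* Randomness of step t: a uniformly random ordering of the four directions.
   The first direction in this ordering that lies in a set C of candidates is
   uniformly distributed on C, independently across steps. *)
definition perm_pmf :: "dir list pmf" where
  "perm_pmf = pmf_of_set {xs. distinct xs \<and> set xs = (UNIV :: dir set)}"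

(* state: current vertex X_t and set H_t of traversed (undirected) edges *)
type_synonym grw_st = "(int \<times> int) \<times> (int \<times> int) set set"

definition grw_step :: "dir list \<Rightarrow> grw_st \<Rightarrow> grw_st" where
  "grw_step xs s =
     (let p = fst s; H = snd s;
          J = filter (\<lambda>d. {p, mv p d} \<notin> H) xs;
          d = (if J \<noteq> [] then hd J else hd xs)
      in (mv p d, insert {p, mv p d} H))"

primrec grw_state :: "(nat \<Rightarrow> dir list) \<Rightarrow> nat \<Rightarrow> grw_st" where
  "grw_state \<omega> 0 = ((0, 0), {})"
| "grw_state \<omega> (Suc t) = grw_step (\<omega> t) (grw_state \<omega> t)"

definition grw_space :: "(nat \<Rightarrow> dir list) measure" where
  "grw_space = PiM UNIV (\<lambda>_. measure_pmf perm_pmf)"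

datatype mirror = NoMirror | Slash | Backslash

lemma UNIV_mirror: "(UNIV :: mirror set) = {NoMirror, Slash, Backslash}"
  using mirror.exhaust by blast

instance mirror :: finite
  by standard (simp add: UNIV_mirror)

fun reflect :: "mirror \<Rightarrow> dir \<Rightarrow> dir" where
  "reflect NoMirror d = d"
| "reflect Slash E = N" | "reflect Slash N = E" | "reflect Slash W = S" | "reflect Slash S = W"
| "reflect Backslash E = S" | "reflect Backslash S = E"
| "reflect Backslash W = N" | "reflect Backslash N = W"

primrec mirror_state :: "(int \<times> int \<Rightarrow> mirror) \<Rightarrow> dir \<Rightarrow> nat \<Rightarrow> (int \<times> int) \<times> dir" where
  "mirror_state \<eta> d0 0 = ((0, 0), d0)"
| "mirror_state \<eta> d0 (Suc t) =
     (let p = fst (mirror_state \<eta> d0 t); d = snd (mirror_state \<eta> d0 t); q = mv p d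
      in (q, reflect (\<eta> q) d))"

definition mirror_space :: "((int \<times> int \<Rightarrow> mirror) \<times> dir) measure" where
  "mirror_space =
     PiM UNIV (\<lambda>_. measure_pmf (pmf_of_set (UNIV :: mirror set)))
     \<Otimes>\<^sub>M measure_pmf (pmf_of_set (UNIV :: dir set))"

end

theory Submission
  imports Defs
begin

(* Both processes move one lattice step per time unit, so the event "the process
   returns to the origin" is the disjoint union, over the first return time n and
   over the finitely many lattice paths f of length n that meet the origin only at
   time n, of the events "the process follows f up to time n".  The theorem thus
   reduces to: every such path has the same probability in both models.

   For the greedy walk this probability is a product of one-step probabilities:
   1/3 for leaving a vertex entered for the first time along a fresh edge, and 1
   resp. 0 when a vertex is entered a second time and only one unused edge is left.
   For the mirror model it is 1/4 (initial direction) times, for every visited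
   vertex, the fraction of the three mirror states consistent with all turns the
   path takes there.  An invariant describing, at every vertex, the used directions
   and the admissible mirrors shows that both products grow by the same factor in
   every step, as long as the origin is not revisited. *)

lemma dir_cases: "(d::dir) = E \<or> d = N \<or> d = W \<or> d = S"
  by (cases d) auto

lemma card_dir: "card (UNIV :: dir set) = 4"
  by (simp add: UNIV_dir)

lemma card_compl_single: "card (- {x::dir}) = 3"
  by (simp add: Compl_eq_Diff_UNIV card_Diff_subset card_dir)

fun opp :: "dir \<Rightarrow> dir" where
  "opp E = W" | "opp W = E" | "opp N = S" | "opp S = N"

lemma opp_opp [simp]: "opp (opp d) = d"
  by (cases d) auto

lemma mv_inj: "mv p d = mv p e \<longleftrightarrow> d = e"
  by (cases d; cases e) (auto simp: mv_def prod_eq_iff)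

lemma mv_neq: "mv p d \<noteq> p"
  by (cases d) (auto simp: mv_def prod_eq_iff)

lemma mv_opp [simp]: "mv (mv p d) (opp d) = p"
  by (cases d) (auto simp: mv_def prod_eq_iff)

lemma edge_eq:
  "{v, mv v e} = {p, mv p d} \<longleftrightarrow> (v = p \<and> e = d) \<or> (v = mv p d \<and> e = opp d)"
proof
  assume h: "{v, mv v e} = {p, mv p d}"
  show "(v = p \<and> e = d) \<or> (v = mv p d \<and> e = opp d)"
  proof (cases "v = p")
    case True
    then show ?thesis using h mv_neq[of p e] mv_inj by (auto simp: doubleton_eq_iff)
  next
    case False
    then have "v = mv p d" "mv v e = p" using h by (auto simp: doubleton_eq_iff)
    then have "mv v e = mv v (opp d)" by simp
    then show ?thesis using \<open>v = mv p d\<close> mv_inj by blast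
  qed
next
  assume "(v = p \<and> e = d) \<or> (v = mv p d \<and> e = opp d)"
  then show "{v, mv v e} = {p, mv p d}" by auto
qed

definition first_in :: "dir set \<Rightarrow> dir list \<Rightarrow> dir" where
  "first_in G xs = (let J = filter (\<lambda>d. d \<in> G) xs in if J \<noteq> [] then hd J else hd xs)"

lemma grw_step_eq:
  "grw_step xs (p, H) =
     (mv p (first_in {d. {p, mv p d} \<notin> H} xs), insert {p, mv p (first_in {d. {p, mv p d} \<notin> H} xs)} H)"
  by (simp add: grw_step_def first_in_def Let_def)

definition perm_list :: "dir list list" where
  "perm_list = [[E,N,W,S],[E,N,S,W],[E,W,N,S],[E,W,S,N],[E,S,N,W],[E,S,W,N],
                [N,E,W,S],[N,E,S,W],[N,W,E,S],[N,W,S,E],[N,S,E,W],[N,S,W,E],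
                [W,E,N,S],[W,E,S,N],[W,N,E,S],[W,N,S,E],[W,S,E,N],[W,S,N,E],
                [S,E,N,W],[S,E,W,N],[S,N,E,W],[S,N,W,E],[S,W,E,N],[S,W,N,E]]"

lemma orderings_eq: "{xs. distinct xs \<and> set xs = (UNIV :: dir set)} = set perm_list"
proof
  show "set perm_list \<subseteq> {xs. distinct xs \<and> set xs = UNIV}"
    by (auto simp: perm_list_def UNIV_dir)
next
  show "{xs. distinct xs \<and> set xs = UNIV} \<subseteq> set perm_list"
  proof
    fix xs :: "dir list" assume "xs \<in> {xs. distinct xs \<and> set xs = UNIV}"
    then have d: "distinct xs" and s: "set xs = UNIV" by auto
    have "length xs = card (UNIV::dir set)" using distinct_card[OF d] s by simp
    then have "length xs = 4" by (simp add: UNIV_dir)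
    then obtain a b c e where xs: "xs = [a,b,c,e]"
      by (cases xs; cases "tl xs"; cases "tl (tl xs)"; cases "tl (tl (tl xs))") auto
    show "xs \<in> set perm_list" using d s unfolding xs perm_list_def UNIV_dir
      using dir_cases[of a] dir_cases[of b] dir_cases[of c] dir_cases[of e]
      by (elim disjE) (simp_all add: insert_eq_iff)
  qed
qed

(* A set of directions as the union of its possible members; used to split the
   computation below into the 16 subsets of directions. *)
lemma set_of_members:
  "(G::dir set) = (if E\<in>G then {E} else {}) \<union> (if N\<in>G then {N} else {}) \<union>
                   (if W\<in>G then {W} else {}) \<union> (if S\<in>G then {S} else {})"
proof (rule set_eqI)
  fix x show "x \<in> G \<longleftrightarrow> x \<in> (if E\<in>G then {E} else {}) \<union> (if N\<in>G then {N} else {}) \<union>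
                   (if W\<in>G then {W} else {}) \<union> (if S\<in>G then {S} else {})"
    using dir_cases[of x] by auto
qed

lemma measure_first_in:
  "measure (measure_pmf perm_pmf) {xs. first_in G xs = d} =
     (if G = {} then 1/4 else if d \<in> G then 1 / real (card G) else 0)"
proof -
  have "measure (measure_pmf perm_pmf) {xs. first_in G xs = d}
        = real (length (filter (\<lambda>xs. first_in G xs = d) perm_list)) / 24"
  proof -
    have dl: "distinct perm_list" by (simp add: perm_list_def)
    have c24: "card (set perm_list) = 24" using distinct_card[OF dl] by (simp add: perm_list_def)
    have "card (set perm_list \<inter> {xs. first_in G xs = d}) = length (filter (\<lambda>xs. first_in G xs = d) perm_list)"
      using distinct_length_filter[OF dl] by (simp add: Int_commute)
    then show ?thesis unfolding perm_pmf_def orderings_eq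
      using c24 by (subst measure_pmf_of_set) auto
  qed
  also have "\<dots> = (if G = {} then 1/4 else if d \<in> G then 1 / real (card G) else 0)"
    apply (subst (3 4 5) set_of_members)
    using dir_cases[of d]
    apply (cases "E \<in> G"; cases "N \<in> G"; cases "W \<in> G"; cases "S \<in> G")
        apply (auto simp: perm_list_def first_in_def)
     apply (metis dir_cases)+
    done
  finally show ?thesis .
qed

primrec pos :: "(nat \<Rightarrow> dir) \<Rightarrow> nat \<Rightarrow> int \<times> int" where
  "pos f 0 = (0, 0)"
| "pos f (Suc i) = mv (pos f i) (f i)"

primrec hist :: "(nat \<Rightarrow> dir) \<Rightarrow> nat \<Rightarrow> (int \<times> int) set set" where
  "hist f 0 = {}"
| "hist f (Suc i) = insert {pos f i, pos f (Suc i)} (hist f i)"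

definition used :: "(nat \<Rightarrow> dir) \<Rightarrow> nat \<Rightarrow> int \<times> int \<Rightarrow> dir set" where
  "used f k v = {d. {v, mv v d} \<in> hist f k}"

lemma used_0 [simp]: "used f 0 v = {}"
  by (simp add: used_def)

lemma used_Suc:
  "used f (Suc k) v = used f k v \<union> (if v = pos f k then {f k} else {})
                                 \<union> (if v = pos f (Suc k) then {opp (f k)} else {})"
  by (auto simp: used_def edge_eq)

lemma used_Suc_current: "used f (Suc k) (pos f k) = insert (f k) (used f k (pos f k))"
  using mv_neq[of "pos f k" "f k"] by (auto simp: used_Suc)

lemma used_Suc_next: "used f (Suc k) (pos f (Suc k)) = insert (opp (f k)) (used f k (pos f (Suc k)))"
  using mv_neq[of "pos f k" "f k"] by (auto simp: used_Suc)

lemma used_Suc_other: "v \<noteq> pos f k \<Longrightarrow> v \<noteq> pos f (Suc k) \<Longrightarrow> used f (Suc k) v = used f k v"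
  by (simp add: used_Suc)

lemma opp_notin_used_next: "f k \<notin> used f k (pos f k) \<Longrightarrow> opp (f k) \<notin> used f k (pos f (Suc k))"
  by (auto simp: used_def insert_commute)

lemma compl_used: "{d. {p, mv p d} \<notin> hist f n} = - used f n p"
  by (auto simp: used_def)

definition first_return :: "(nat \<Rightarrow> int \<times> int) \<Rightarrow> nat \<Rightarrow> bool" where
  "first_return s n \<longleftrightarrow> 0 < n \<and> s n = (0, 0) \<and> (\<forall>i\<in>{0<..<n}. s i \<noteq> (0, 0))"

lemma first_return_cong: "\<forall>j\<le>n. s j = s' j \<Longrightarrow> first_return s n \<longleftrightarrow> first_return s' n"
  by (auto simp: first_return_def)

lemma first_return_unique: "first_return s m \<Longrightarrow> first_return s n \<Longrightarrow> m = n"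
  unfolding first_return_def by (metis greaterThanLessThan_iff linorder_neqE_nat)

lemma ex_first_return: "(\<exists>t>0. s t = (0, 0)) \<longleftrightarrow> (\<exists>n. first_return s n)"
proof
  assume "\<exists>t>0. s t = (0, 0)"
  then obtain t where "0 < t \<and> s t = (0, 0)" "\<forall>i<t. \<not> (0 < i \<and> s i = (0, 0))"
    using exists_least_iff[of "\<lambda>t. 0 < t \<and> s t = (0, 0)"] by blast
  then have "first_return s t" by (auto simp: first_return_def)
  then show "\<exists>n. first_return s n" ..
qed (auto simp: first_return_def)

definition first_return_paths :: "nat \<Rightarrow> (nat \<Rightarrow> dir) set" where
  "first_return_paths n = {f \<in> PiE {..<n} (\<lambda>_. UNIV). first_return (pos f) n}"

lemma finite_first_return_paths: "finite (first_return_paths n)"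
proof -
  have "finite (PiE {..<n} (\<lambda>_. UNIV :: dir set))" by (intro finite_PiE) auto
  then show ?thesis unfolding first_return_paths_def by auto
qed

definition path_event :: "'a set \<Rightarrow> ('a \<Rightarrow> nat \<Rightarrow> int \<times> int) \<Rightarrow> (nat \<Rightarrow> dir) \<Rightarrow> nat \<Rightarrow> 'a set" where
  "path_event A Pos f n = {\<omega> \<in> A. \<forall>j\<le>n. Pos \<omega> j = pos f j}"

lemma pos_repr:
  assumes "s 0 = (0, 0)" and "\<And>j. \<exists>d. s (Suc j) = mv (s j) d"
  shows "\<exists>f \<in> PiE {..<n} (\<lambda>_. UNIV). \<forall>j\<le>n. s j = pos f j"
proof -
  define g where "g j = (SOME d. s (Suc j) = mv (s j) d)" for j
  have g: "s (Suc j) = mv (s j) (g j)" for j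
    unfolding g_def using someI_ex[OF assms(2)[of j]] .
  define f where "f = restrict g {..<n}"
  have "j \<le> n \<Longrightarrow> s j = pos f j" for j
    by (induction j) (use assms(1) g in \<open>auto simp: f_def\<close>)
  moreover have "f \<in> PiE {..<n} (\<lambda>_. UNIV)" by (simp add: f_def)
  ultimately show ?thesis by blast
qed

lemma pos_determines:
  assumes "\<forall>j\<le>n. pos f j = pos g j" "j < n" shows "f j = g j"
proof -
  have "mv (pos f j) (f j) = mv (pos g j) (g j)" using assms
    by (metis Suc_leI less_imp_le_nat pos.simps(2))
  moreover have "pos f j = pos g j" using assms by simp
  ultimately show ?thesis by (simp add: mv_inj)
qed

lemma first_return_event_eq:
  assumes "\<And>\<omega>. Pos \<omega> 0 = (0, 0)" and "\<And>\<omega> j. \<exists>d. Pos \<omega> (Suc j) = mv (Pos \<omega> j) d"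
  shows "{\<omega> \<in> A. first_return (Pos \<omega>) n} = (\<Union>f\<in>first_return_paths n. path_event A Pos f n)"
proof
  show "{\<omega> \<in> A. first_return (Pos \<omega>) n} \<subseteq> (\<Union>f\<in>first_return_paths n. path_event A Pos f n)"
  proof
    fix \<omega> assume w: "\<omega> \<in> {\<omega> \<in> A. first_return (Pos \<omega>) n}"
    obtain f where f: "f \<in> PiE {..<n} (\<lambda>_. UNIV)" "\<forall>j\<le>n. Pos \<omega> j = pos f j"
      using pos_repr[of "Pos \<omega>" n] assms by blast
    then have "f \<in> first_return_paths n"
      using w first_return_cong[of n "Pos \<omega>" "pos f"] by (auto simp: first_return_paths_def)
    then show "\<omega> \<in> (\<Union>f\<in>first_return_paths n. path_event A Pos f n)"
      using w f by (auto simp: path_event_def)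
  qed
next
  show "(\<Union>f\<in>first_return_paths n. path_event A Pos f n) \<subseteq> {\<omega> \<in> A. first_return (Pos \<omega>) n}"
  proof
    fix \<omega> assume "\<omega> \<in> (\<Union>f\<in>first_return_paths n. path_event A Pos f n)"
    then obtain f where "f \<in> first_return_paths n" "\<omega> \<in> A" "\<forall>j\<le>n. Pos \<omega> j = pos f j"
      by (auto simp: path_event_def)
    then show "\<omega> \<in> {\<omega> \<in> A. first_return (Pos \<omega>) n}"
      using first_return_cong[of n "Pos \<omega>" "pos f"] by (simp add: first_return_paths_def)
  qed
qed

lemma path_events_disjoint: "disjoint_family_on (\<lambda>f. path_event A Pos f n) (first_return_paths n)"
unfolding disjoint_family_on_def
proof (intro ballI impI, rule ccontr)
  fix f g assume fg: "f \<in> first_return_paths n" "g \<in> first_return_paths n" "f \<noteq> g"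
    and "path_event A Pos f n \<inter> path_event A Pos g n \<noteq> {}"
  then have same: "\<forall>j\<le>n. pos f j = pos g j" by (auto simp: path_event_def)
  have "f = g"
  proof
    fix j show "f j = g j"
      using fg(1,2) pos_determines[OF same, of j]
      by (cases "j < n") (auto simp: first_return_paths_def PiE_def extensional_def)
  qed
  with fg(3) show False by simp
qed

lemma first_return_decomposition:
  assumes "prob_space M"
    and "\<And>\<omega>. Pos \<omega> 0 = (0, 0)" and "\<And>\<omega> j. \<exists>d. Pos \<omega> (Suc j) = mv (Pos \<omega> j) d"
    and path_prob: "\<And>f n. f \<in> first_return_paths n \<Longrightarrow>
          path_event (space M) Pos f n \<in> sets M \<and> measure M (path_event (space M) Pos f n) = w f n"
  shows "(\<lambda>n. \<Sum>f\<in>first_return_paths n. w f n) sums measure M {\<omega> \<in> space M. \<exists>t>0. Pos \<omega> t = (0, 0)}"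
proof -
  interpret prob_space M by fact
  define F where "F n = {\<omega> \<in> space M. first_return (Pos \<omega>) n}" for n
  have F_eq: "F n = (\<Union>f\<in>first_return_paths n. path_event (space M) Pos f n)" for n
    unfolding F_def using assms(2,3) by (rule first_return_event_eq)
  have F_sets: "F n \<in> sets M" for n
    unfolding F_eq using path_prob finite_first_return_paths by blast
  have "measure M (F n) = (\<Sum>f\<in>first_return_paths n. measure M (path_event (space M) Pos f n))" for n
    unfolding F_eq using path_prob
    by (intro finite_measure_finite_Union finite_first_return_paths path_events_disjoint) auto
  then have F_measure: "measure M (F n) = (\<Sum>f\<in>first_return_paths n. w f n)" for n
    using path_prob by simp
  have "disjoint_family F"
    using first_return_unique by (fastforce simp: disjoint_family_on_def F_def)
  then have "(\<lambda>n. measure M (F n)) sums measure M (\<Union>n. F n)"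
    using F_sets by (intro finite_measure_UNION) auto
  moreover have "(\<Union>n. F n) = {\<omega> \<in> space M. \<exists>t>0. Pos \<omega> t = (0, 0)}"
    using ex_first_return by (auto simp: F_def)
  ultimately show ?thesis by (simp add: F_measure)
qed

lemma collect_emb:
  "{x\<in>space (Pi\<^sub>M I M). \<forall>i\<in>J. x i \<in> X i} = prod_emb I M J (Pi\<^sub>E J X)"
  if "J \<subseteq> I" "\<And>i. i \<in> J \<Longrightarrow> X i \<subseteq> space (M i)"
  unfolding prod_emb_def using that by (auto simp: space_PiM Pi_iff)

lemma product_prob_space_pmf: "product_prob_space (\<lambda>_. measure_pmf p)"
  by (simp add: product_prob_space_def product_sigma_finite_def product_prob_space_axioms_def
      prob_space_measure_pmf prob_space_imp_sigma_finite)

definition grw_choice :: "(nat \<Rightarrow> dir) \<Rightarrow> nat \<Rightarrow> dir list set" where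
  "grw_choice f j = {xs. first_in (- used f j (pos f j)) xs = f j}"

definition grw_step_prob :: "(nat \<Rightarrow> dir) \<Rightarrow> nat \<Rightarrow> real" where
  "grw_step_prob f j = measure (measure_pmf perm_pmf) (grw_choice f j)"

definition grw_path_prob :: "(nat \<Rightarrow> dir) \<Rightarrow> nat \<Rightarrow> real" where
  "grw_path_prob f n = (\<Prod>j<n. grw_step_prob f j)"

lemma grw_path_prob_Suc: "grw_path_prob f (Suc n) = grw_path_prob f n * grw_step_prob f n"
  by (simp add: grw_path_prob_def)

lemma grw_follows:
  "((\<forall>j\<le>n. fst (grw_state \<omega> j) = pos f j) \<longleftrightarrow> (\<forall>j<n. \<omega> j \<in> grw_choice f j)) \<and>
   ((\<forall>j<n. \<omega> j \<in> grw_choice f j) \<longrightarrow> grw_state \<omega> n = (pos f n, hist f n))"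
proof (induction n)
  case 0 then show ?case by simp
next
  case (Suc n)
  show ?case
  proof (cases "\<forall>j<n. \<omega> j \<in> grw_choice f j")
    case False
    then have "\<not> (\<forall>j\<le>n. fst (grw_state \<omega> j) = pos f j)" using Suc.IH by blast
    then show ?thesis using False by (auto simp: less_Suc_eq le_Suc_eq)
  next
    case True
    then have st: "grw_state \<omega> n = (pos f n, hist f n)" "\<forall>j\<le>n. fst (grw_state \<omega> j) = pos f j"
      using Suc.IH by blast+
    define c where "c = first_in (- used f n (pos f n)) (\<omega> n)"
    have step: "grw_state \<omega> (Suc n) = (mv (pos f n) c, insert {pos f n, mv (pos f n) c} (hist f n))"
      by (simp add: st grw_step_eq compl_used c_def)
    have "(\<forall>j\<le>Suc n. fst (grw_state \<omega> j) = pos f j) \<longleftrightarrow> c = f n"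
      using st step by (auto simp: le_Suc_eq mv_inj)
    moreover have "(\<forall>j<Suc n. \<omega> j \<in> grw_choice f j) \<longleftrightarrow> c = f n"
      using True by (auto simp: less_Suc_eq grw_choice_def c_def)
    ultimately show ?thesis using step by simp
  qed
qed

lemma grw_path_event:
  "path_event (space grw_space) (\<lambda>\<omega> t. fst (grw_state \<omega> t)) f n \<in> sets grw_space \<and>
   measure grw_space (path_event (space grw_space) (\<lambda>\<omega> t. fst (grw_state \<omega> t)) f n) = grw_path_prob f n"
proof -
  interpret product_prob_space "\<lambda>_::nat. measure_pmf perm_pmf" UNIV
    by (rule product_prob_space_pmf)
  have eq: "path_event (space grw_space) (\<lambda>\<omega> t. fst (grw_state \<omega> t)) f n
      = prod_emb UNIV (\<lambda>_. measure_pmf perm_pmf) {..<n} (Pi\<^sub>E {..<n} (grw_choice f))"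
    unfolding grw_space_def path_event_def using grw_follows[of n _ f]
    by (subst collect_emb[symmetric]) auto
  have "prod_emb UNIV (\<lambda>_. measure_pmf perm_pmf) {..<n} (Pi\<^sub>E {..<n} (grw_choice f)) \<in> sets grw_space"
    unfolding grw_space_def by (rule sets_PiM_I) auto
  moreover have "measure grw_space (prod_emb UNIV (\<lambda>_. measure_pmf perm_pmf) {..<n}
                   (Pi\<^sub>E {..<n} (grw_choice f))) = grw_path_prob f n"
    unfolding grw_space_def
    by (subst measure_PiM_emb) (auto simp: grw_path_prob_def grw_step_prob_def)
  ultimately show ?thesis unfolding eq by simp
qed

lemma prob_space_grw: "prob_space grw_space"
  unfolding grw_space_def by (rule prob_space_PiM) (simp add: prob_space_measure_pmf)

lemma grw_return_sums:
  "(\<lambda>n. \<Sum>f\<in>first_return_paths n. grw_path_prob f n)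
     sums measure grw_space {\<omega> \<in> space grw_space. \<exists>t>0. fst (grw_state \<omega> t) = (0, 0)}"
proof (rule first_return_decomposition[OF prob_space_grw, where Pos = "\<lambda>\<omega> t. fst (grw_state \<omega> t)"])
  show "\<exists>d. fst (grw_state \<omega> (Suc j)) = mv (fst (grw_state \<omega> j)) d" for \<omega> j
    by (cases "grw_state \<omega> j") (auto simp: grw_step_eq)
qed (simp_all add: grw_path_event)

definition admissible :: "(nat \<Rightarrow> dir) \<Rightarrow> nat \<Rightarrow> int \<times> int \<Rightarrow> mirror set" where
  "admissible f n v = {m. \<forall>i. 1 \<le> i \<longrightarrow> i < n \<longrightarrow> pos f i = v \<longrightarrow> reflect m (f (i-1)) = f i}"

definition visited :: "(nat \<Rightarrow> dir) \<Rightarrow> nat \<Rightarrow> (int \<times> int) set" where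
  "visited f n = pos f ` {1..<n}"

definition mirror_path_prob :: "(nat \<Rightarrow> dir) \<Rightarrow> nat \<Rightarrow> real" where
  "mirror_path_prob f n = 1/4 * (\<Prod>v\<in>visited f n. real (card (admissible f n v)) / 3)"

lemma finite_visited: "finite (visited f n)"
  by (simp add: visited_def)

lemma card_mirror: "card (UNIV :: mirror set) = 3"
  by (simp add: UNIV_mirror)

lemma mirror_follows:
  "((\<forall>i\<le>Suc j. fst (mirror_state \<eta> d0 i) = pos f i) \<longleftrightarrow>
      (d0 = f 0 \<and> (\<forall>i. 1 \<le> i \<longrightarrow> i < Suc j \<longrightarrow> reflect (\<eta> (pos f i)) (f (i-1)) = f i))) \<and>
   ((d0 = f 0 \<and> (\<forall>i. 1 \<le> i \<longrightarrow> i < Suc j \<longrightarrow> reflect (\<eta> (pos f i)) (f (i-1)) = f i))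
      \<longrightarrow> mirror_state \<eta> d0 j = (pos f j, f j))"
proof (induction j)
  case 0
  have "(\<forall>i\<le>Suc 0. fst (mirror_state \<eta> d0 i) = pos f i) \<longleftrightarrow> mv (0,0) d0 = mv (0,0) (f 0)"
    by (auto simp: le_Suc_eq Let_def)
  then show ?case by (auto simp: mv_inj)
next
  case (Suc j)
  let ?R = "\<lambda>k. d0 = f 0 \<and> (\<forall>i. 1 \<le> i \<longrightarrow> i < k \<longrightarrow> reflect (\<eta> (pos f i)) (f (i-1)) = f i)"
  let ?P = "\<lambda>k. \<forall>i\<le>k. fst (mirror_state \<eta> d0 i) = pos f i"
  show ?case
  proof (cases "?R (Suc j)")
    case False
    then have "\<not> ?P (Suc j)" using Suc.IH by blast
    moreover have "\<not> ?R (Suc (Suc j))" using False by auto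
    ultimately show ?thesis by (auto simp: le_Suc_eq)
  next
    case True
    then have st: "mirror_state \<eta> d0 j = (pos f j, f j)" "?P (Suc j)" using Suc.IH by blast+
    define d where "d = reflect (\<eta> (pos f (Suc j))) (f j)"
    have s1: "mirror_state \<eta> d0 (Suc j) = (pos f (Suc j), d)"
      by (simp add: st Let_def d_def)
    have s2: "fst (mirror_state \<eta> d0 (Suc (Suc j))) = mv (pos f (Suc j)) d"
      by (subst mirror_state.simps(2)) (simp add: s1 Let_def del: mirror_state.simps)
    have "?P (Suc (Suc j)) \<longleftrightarrow> d = f (Suc j)"
      using st(2) s2 by (auto simp: le_Suc_eq mv_inj simp del: mirror_state.simps)
    moreover have "?R (Suc (Suc j)) \<longleftrightarrow> d = f (Suc j)"
      using True by (auto simp: less_Suc_eq d_def)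
    ultimately show ?thesis using s1 by (simp add: d_def)
  qed
qed

lemma mirror_follows_iff:
  assumes "1 \<le> n"
  shows "(\<forall>j\<le>n. fst (mirror_state \<eta> d0 j) = pos f j) \<longleftrightarrow>
         d0 = f 0 \<and> (\<forall>v\<in>visited f n. \<eta> v \<in> admissible f n v)"
proof -
  obtain j where n: "n = Suc j" using assms by (cases n) auto
  have "(\<forall>v\<in>visited f n. \<eta> v \<in> admissible f n v) \<longleftrightarrow>
        (\<forall>i. 1 \<le> i \<longrightarrow> i < n \<longrightarrow> reflect (\<eta> (pos f i)) (f (i-1)) = f i)"
    unfolding visited_def admissible_def by auto
  then show ?thesis using mirror_follows[of j \<eta> d0 f] n by simp
qed

(* The path event is a cylinder: initial direction f 0, and mirror at each
   visited vertex v in admissible f n v; its measure is therefore a product. *)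
lemma mirror_path_event:
  assumes n: "1 \<le> n"
  shows "path_event (space mirror_space) (\<lambda>x t. fst (mirror_state (fst x) (snd x) t)) f n \<in> sets mirror_space \<and>
         measure mirror_space (path_event (space mirror_space) (\<lambda>x t. fst (mirror_state (fst x) (snd x) t)) f n)
           = mirror_path_prob f n"
proof -
  interpret product_prob_space "\<lambda>_::int\<times>int. measure_pmf (pmf_of_set (UNIV::mirror set))" UNIV
    by (rule product_prob_space_pmf)
  let ?PM = "PiM (UNIV::(int\<times>int) set) (\<lambda>_. measure_pmf (pmf_of_set (UNIV :: mirror set)))"
  let ?D = "measure_pmf (pmf_of_set (UNIV :: dir set))"
  let ?A = "prod_emb UNIV (\<lambda>_. measure_pmf (pmf_of_set (UNIV :: mirror set))) (visited f n)
              (Pi\<^sub>E (visited f n) (admissible f n))"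
  have A_eq: "?A = {\<eta> \<in> space ?PM. \<forall>v\<in>visited f n. \<eta> v \<in> admissible f n v}"
    by (subst collect_emb) auto
  have eq: "path_event (space mirror_space) (\<lambda>x t. fst (mirror_state (fst x) (snd x) t)) f n = ?A \<times> {f 0}"
    unfolding A_eq mirror_space_def space_pair_measure path_event_def
    using mirror_follows_iff[OF n] by auto
  have A_sets: "?A \<in> sets ?PM" by (rule sets_PiM_I) (auto simp: finite_visited)
  have "emeasure mirror_space (?A \<times> {f 0}) = emeasure ?PM ?A * emeasure ?D {f 0}"
    unfolding mirror_space_def
    by (rule measure_pmf.emeasure_pair_measure_Times) (auto simp: A_sets)
  then have "measure mirror_space (?A \<times> {f 0}) = measure ?PM ?A * measure ?D {f 0}"
    by (simp add: measure_def enn2real_mult)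
  also have "\<dots> = mirror_path_prob f n"
  proof -
    have "measure ?PM ?A = (\<Prod>v\<in>visited f n. real (card (admissible f n v)) / 3)"
      by (subst measure_PiM_emb) (auto simp: finite_visited measure_pmf_of_set card_mirror)
    moreover have "measure ?D {f 0} = 1/4"
      by (simp add: measure_pmf_of_set card_dir)
    ultimately show ?thesis by (simp add: mirror_path_prob_def)
  qed
  finally have "measure mirror_space (?A \<times> {f 0}) = mirror_path_prob f n" .
  moreover have "?A \<times> {f 0} \<in> sets mirror_space"
    unfolding mirror_space_def using A_sets by (intro pair_measureI) auto
  ultimately show ?thesis unfolding eq by simp
qed

lemma prob_space_mirror: "prob_space mirror_space"
  unfolding mirror_space_def
  by (intro prob_space_pair prob_space_PiM) (simp_all add: prob_space_measure_pmf)

lemma mirror_return_sums: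
  "(\<lambda>n. \<Sum>f\<in>first_return_paths n. mirror_path_prob f n)
     sums measure mirror_space {x \<in> space mirror_space. \<exists>t>0. fst (mirror_state (fst x) (snd x) t) = (0, 0)}"
proof (rule first_return_decomposition[OF prob_space_mirror,
         where Pos = "\<lambda>x t. fst (mirror_state (fst x) (snd x) t)"])
  show "\<exists>d. fst (mirror_state (fst x) (snd x) (Suc j)) = mv (fst (mirror_state (fst x) (snd x) j)) d" for x j
    by (rule exI[of _ "snd (mirror_state (fst x) (snd x) j)"]) (simp add: Let_def)
  show "path_event (space mirror_space) (\<lambda>x t. fst (mirror_state (fst x) (snd x) t)) f n \<in> sets mirror_space \<and>
        measure mirror_space (path_event (space mirror_space) (\<lambda>x t. fst (mirror_state (fst x) (snd x) t)) f n)
          = mirror_path_prob f n" if "f \<in> first_return_paths n" for f n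
    using that by (intro mirror_path_event) (simp add: first_return_paths_def first_return_def)
qed simp

(* A mirror m pairs the four edges at a vertex: the particle arriving along the
   edge in direction d leaves along the edge in direction partner m d.
   mirror_for a d is the unique mirror turning the travel direction a into d. *)
definition partner :: "mirror \<Rightarrow> dir \<Rightarrow> dir" where
  "partner m d = reflect m (opp d)"

definition mirror_for :: "dir \<Rightarrow> dir \<Rightarrow> mirror" where
  "mirror_for a d = (if d = a then NoMirror else if reflect Slash a = d then Slash else Backslash)"

lemma reflect_iff: "reflect m a = d \<longleftrightarrow> d \<noteq> opp a \<and> m = mirror_for a d"
  by (cases m; cases a; cases d) (auto simp: mirror_for_def)

lemma card_reflect_set: "card {m. reflect m a = d} = (if d = opp a then 0 else 1)"
  by (simp add: reflect_iff)

lemma remaining_direction: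
  "b \<noteq> opp a \<Longrightarrow> partner m b \<noteq> opp a \<Longrightarrow> x \<notin> {opp a, b, partner m b} \<longleftrightarrow> x = reflect m a"
  by (cases m; cases a; cases b; cases x) (auto simp: partner_def)

lemma admissible_Suc:
  "1 \<le> n \<Longrightarrow> admissible f (Suc n) v =
     admissible f n v \<inter> (if v = pos f n then {m. reflect m (f (n-1)) = f n} else UNIV)"
  by (auto simp: admissible_def less_Suc_eq)

lemma admissible_notin: "v \<notin> visited f n \<Longrightarrow> admissible f n v = UNIV"
  by (auto simp: admissible_def visited_def)

lemma visited_Suc: "1 \<le> n \<Longrightarrow> visited f (Suc n) = insert (pos f n) (visited f n)"
  by (auto simp: visited_def less_Suc_eq)

lemma mirror_path_prob_Suc:
  assumes n: "1 \<le> n"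
  shows "mirror_path_prob f (Suc n) * card (admissible f n (pos f n))
       = mirror_path_prob f n * card (admissible f (Suc n) (pos f n))"
proof -
  define p where "p = pos f n"
  define g where "g k v = real (card (admissible f k v)) / 3" for k v
  have other: "g (Suc n) v = g n v" if "v \<in> visited f n - {p}" for v
    using n that by (auto simp: g_def admissible_Suc p_def)
  have after: "(\<Prod>v\<in>visited f (Suc n). g (Suc n) v) = g (Suc n) p * (\<Prod>v\<in>visited f n - {p}. g n v)"
    using n finite_visited other by (simp add: visited_Suc p_def[symmetric] prod.insert_remove)
  have before: "(\<Prod>v\<in>visited f n. g n v) = g n p * (\<Prod>v\<in>visited f n - {p}. g n v)"
  proof (cases "p \<in> visited f n")
    case True
    then show ?thesis using finite_visited by (simp add: prod.remove)
  next
    case False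
    then have "g n p = 1" by (simp add: g_def admissible_notin card_mirror)
    then show ?thesis using False by simp
  qed
  have "mirror_path_prob f (Suc n) * g n p = mirror_path_prob f n * g (Suc n) p"
    unfolding mirror_path_prob_def g_def[symmetric] after before by simp
  then show ?thesis by (simp add: g_def p_def)
qed

lemma mirror_path_prob_zero:
  assumes n: "1 \<le> n" and zero: "mirror_path_prob f n = 0"
  shows "mirror_path_prob f (Suc n) = 0"
proof -
  from zero obtain v where v: "v \<in> visited f n" "admissible f n v = {}"
    using finite_visited by (auto simp: mirror_path_prob_def)
  then have "admissible f (Suc n) v = {}" using n by (simp add: admissible_Suc)
  moreover have "v \<in> visited f (Suc n)" using v n by (simp add: visited_Suc)
  ultimately show ?thesis using finite_visited by (auto simp: mirror_path_prob_def)
qed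

(* The state of a vertex v away from the walker: untouched, or its mirror is
   determined and either one pair {b, partner m b} or all four directions are used. *)
definition at_rest :: "(nat \<Rightarrow> dir) \<Rightarrow> nat \<Rightarrow> int \<times> int \<Rightarrow> bool" where
  "at_rest f n v \<longleftrightarrow>
     (used f n v = {} \<and> admissible f n v = UNIV) \<or>
     (\<exists>m b. admissible f n v = {m} \<and> (used f n v = {b, partner m b} \<or> used f n v = UNIV))"

(* The state of the vertex just entered travelling in direction a: entered for
   the first time, or entered a second time with one pair already used. *)
definition entered :: "(nat \<Rightarrow> dir) \<Rightarrow> nat \<Rightarrow> int \<times> int \<Rightarrow> dir \<Rightarrow> bool" where
  "entered f n v a \<longleftrightarrow>
     (used f n v = {opp a} \<and> admissible f n v = UNIV) \<or>
     (\<exists>m b. admissible f n v = {m} \<and> used f n v = {opp a, b, partner m b} \<and>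
            b \<noteq> opp a \<and> partner m b \<noteq> opp a)"

definition path_invariant :: "(nat \<Rightarrow> dir) \<Rightarrow> nat \<Rightarrow> bool" where
  "path_invariant f n \<longleftrightarrow>
     used f n (0, 0) = {f 0} \<and>
     (\<forall>v. v \<noteq> (0, 0) \<longrightarrow> v \<noteq> pos f n \<longrightarrow> at_rest f n v) \<and>
     entered f n (pos f n) (f (n-1))"

lemma path_invariant_1: "path_invariant f 1"
proof -
  let ?q = "mv (0, 0) (f 0)"
  have q: "?q \<noteq> (0, 0)" "(0, 0) \<noteq> ?q" using mv_neq[of "(0, 0)" "f 0"] by auto
  have used_1: "used f (Suc 0) v =
      (if v = (0, 0) then {f 0} else {}) \<union> (if v = ?q then {opp (f 0)} else {})" for v
    using used_Suc[of f 0 v] by simp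
  have adm_1: "admissible f (Suc 0) v = UNIV" for v by (simp add: admissible_def)
  have "used f (Suc 0) (0, 0) = {f 0}" using q by (simp add: used_1)
  moreover have "at_rest f (Suc 0) v" if "v \<noteq> (0, 0)" "v \<noteq> ?q" for v
    using that by (simp add: at_rest_def used_1 adm_1)
  moreover have "entered f (Suc 0) ?q (f 0)" using q by (simp add: entered_def used_1 adm_1)
  ultimately show ?thesis by (simp add: path_invariant_def)
qed

lemma step_prob_fresh:
  "used f n (pos f n) = {opp a} \<Longrightarrow> grw_step_prob f n = (if f n = opp a then 0 else 1/3)"
  using dir_cases[of a]
  by (auto simp: grw_step_prob_def grw_choice_def measure_first_in card_compl_single)

lemma step_prob_second:
  "used f n (pos f n) = {opp a, b, partner m b} \<Longrightarrow> b \<noteq> opp a \<Longrightarrow> partner m b \<noteq> opp a \<Longrightarrow>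
   grw_step_prob f n = (if f n = reflect m a then 1 else 0)"
proof -
  assume "used f n (pos f n) = {opp a, b, partner m b}" "b \<noteq> opp a" "partner m b \<noteq> opp a"
  then have "- used f n (pos f n) = {reflect m a}"
    using remaining_direction[of b a m] by auto
  then show ?thesis by (simp add: grw_step_prob_def grw_choice_def measure_first_in)
qed

(* Key identity: the greedy step probability is the fraction of admissible
   mirrors at the current vertex that survive the step's turn. *)
lemma entered_weight:
  assumes n: "1 \<le> n" and ent: "entered f n (pos f n) (f (n-1))"
  shows "grw_step_prob f n * card (admissible f n (pos f n)) = card (admissible f (Suc n) (pos f n))
         \<and> 0 < card (admissible f n (pos f n))"
proof -
  define a where "a = f (n-1)"
  have next_adm: "admissible f (Suc n) (pos f n) = admissible f n (pos f n) \<inter> {m. reflect m a = f n}"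
    using n by (simp add: admissible_Suc a_def)
  from ent consider
      (first) "used f n (pos f n) = {opp a}" "admissible f n (pos f n) = UNIV"
    | (second) m b where "admissible f n (pos f n) = {m}" "used f n (pos f n) = {opp a, b, partner m b}"
        "b \<noteq> opp a" "partner m b \<noteq> opp a"
    unfolding entered_def a_def by blast
  then show ?thesis
  proof cases
    case first
    then show ?thesis
      using step_prob_fresh card_reflect_set by (simp add: next_adm card_mirror)
  next
    case second
    then show ?thesis
      using step_prob_second[OF second(2-4)] by (auto simp: next_adm)
  qed
qed

lemma entered_leave:
  assumes n: "1 \<le> n" and ent: "entered f n (pos f n) (f (n-1))" and moves: "grw_step_prob f n \<noteq> 0"
  shows "f n \<notin> used f n (pos f n) \<and> at_rest f (Suc n) (pos f n)"
proof -
  define a where "a = f (n-1)"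
  have next_adm: "admissible f (Suc n) (pos f n) = admissible f n (pos f n) \<inter> {m. reflect m a = f n}"
    using n by (simp add: admissible_Suc a_def)
  have next_used: "used f (Suc n) (pos f n) = insert (f n) (used f n (pos f n))"
    by (rule used_Suc_current)
  from ent consider
      (first) "used f n (pos f n) = {opp a}" "admissible f n (pos f n) = UNIV"
    | (second) m b where "admissible f n (pos f n) = {m}" "used f n (pos f n) = {opp a, b, partner m b}"
        "b \<noteq> opp a" "partner m b \<noteq> opp a"
    unfolding entered_def a_def by blast
  then show ?thesis
  proof cases
    case first
    then have turn: "f n \<noteq> opp a" using moves step_prob_fresh by auto
    let ?m = "mirror_for a (f n)"
    have reflects: "reflect ?m a = f n" using turn reflect_iff by blast
    have "admissible f (Suc n) (pos f n) = {?m}"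
      using first turn by (auto simp: reflect_iff next_adm)
    moreover have "used f (Suc n) (pos f n) = {opp a, partner ?m (opp a)}"
      using first reflects by (auto simp: partner_def next_used)
    ultimately show ?thesis
      using first turn unfolding at_rest_def by blast
  next
    case second
    then have turn: "f n = reflect m a"
      using moves step_prob_second[OF second(2-4)] by (auto split: if_splits)
    have unused: "f n \<notin> used f n (pos f n)"
      using second remaining_direction[OF second(3,4)] turn by simp
    have "used f (Suc n) (pos f n) = UNIV"
      using second remaining_direction[OF second(3,4)] turn by (auto simp: next_used)
    moreover have "admissible f (Suc n) (pos f n) = {m}" using second turn by (auto simp: next_adm)
    ultimately show ?thesis using unused unfolding at_rest_def by blast
  qed
qed

lemma entered_on_arrival:
  assumes n: "1 \<le> n" and rest: "at_rest f n (pos f (Suc n))"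
    and fresh: "opp (f n) \<notin> used f n (pos f (Suc n))"
  shows "entered f (Suc n) (pos f (Suc n)) (f n)"
proof -
  let ?q = "pos f (Suc n)"
  have adm: "admissible f (Suc n) ?q = admissible f n ?q"
    using n mv_neq[of "pos f n" "f n"] by (simp add: admissible_Suc)
  have used: "used f (Suc n) ?q = insert (opp (f n)) (used f n ?q)"
    by (rule used_Suc_next)
  from rest consider
      (untouched) "used f n ?q = {}" "admissible f n ?q = UNIV"
    | (pair) m b where "admissible f n ?q = {m}" "used f n ?q = {b, partner m b}"
    | (full) "used f n ?q = UNIV"
    unfolding at_rest_def by blast
  then show ?thesis
  proof cases
    case untouched
    then show ?thesis unfolding entered_def adm used by simp
  next
    case pair
    then show ?thesis
      unfolding entered_def adm used using fresh
      by (intro disjI2 exI[of _ m] exI[of _ b]) auto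
  next
    case full
    with fresh show ?thesis by simp
  qed
qed

lemma path_invariant_step:
  assumes n: "1 \<le> n" and inv: "path_invariant f n"
    and away: "pos f n \<noteq> (0, 0)" "pos f (Suc n) \<noteq> (0, 0)" and moves: "grw_step_prob f n \<noteq> 0"
  shows "path_invariant f (Suc n)"
proof -
  let ?p = "pos f n" and ?q = "pos f (Suc n)"
  have qp: "?q \<noteq> ?p" using mv_neq by simp
  from inv have origin: "used f n (0, 0) = {f 0}"
    and rest: "\<And>v. v \<noteq> (0, 0) \<Longrightarrow> v \<noteq> ?p \<Longrightarrow> at_rest f n v"
    and ent: "entered f n ?p (f (n-1))"
    unfolding path_invariant_def by auto
  from entered_leave[OF n ent moves]
  have unused: "f n \<notin> used f n ?p" and left: "at_rest f (Suc n) ?p" by auto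
  have "used f (Suc n) (0, 0) = {f 0}"
    using origin away used_Suc_other[of "(0, 0)" f n] by auto
  moreover have "at_rest f (Suc n) v" if "v \<noteq> (0, 0)" "v \<noteq> ?q" for v
  proof (cases "v = ?p")
    case True
    with left show ?thesis by simp
  next
    case False
    then have "used f (Suc n) v = used f n v" "admissible f (Suc n) v = admissible f n v"
      using that n by (simp_all add: used_Suc_other admissible_Suc)
    then show ?thesis using rest[OF that(1) False] by (simp add: at_rest_def)
  qed
  moreover have "entered f (Suc n) ?q (f n)"
    using entered_on_arrival[OF n rest[OF away(2) qp] opp_notin_used_next[OF unused]] .
  ultimately show ?thesis by (simp add: path_invariant_def)
qed

lemma path_probs_agree:
  assumes "1 \<le> n" "\<forall>i\<in>{0<..<n}. pos f i \<noteq> (0, 0)"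
  shows "grw_path_prob f n = mirror_path_prob f n \<and>
         (grw_path_prob f n \<noteq> 0 \<longrightarrow> pos f n \<noteq> (0, 0) \<longrightarrow> path_invariant f n)"
  using assms
proof (induction n rule: nat_induct_at_least)
  case base
  have "grw_path_prob f 1 = 1/4"
    using dir_cases[of "f 0"]
    by (simp add: grw_path_prob_def grw_step_prob_def grw_choice_def measure_first_in UNIV_dir)
  moreover have "mirror_path_prob f 1 = 1/4" by (simp add: mirror_path_prob_def visited_def)
  ultimately show ?case using path_invariant_1 by simp
next
  case (Suc n)
  have avoid: "\<forall>i\<in>{0<..<n}. pos f i \<noteq> (0, 0)" and away: "pos f n \<noteq> (0, 0)"
    using Suc.prems Suc.hyps by auto
  note IH = Suc.IH[OF avoid]
  show ?case
  proof (cases "grw_path_prob f n = 0")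
    case True
    with IH mirror_path_prob_zero[OF Suc.hyps] show ?thesis by (simp add: grw_path_prob_Suc)
  next
    case False
    then have inv: "path_invariant f n" using IH away by blast
    then have ent: "entered f n (pos f n) (f (n-1))" by (simp add: path_invariant_def)
    define c c' where "c = real (card (admissible f n (pos f n)))"
      and "c' = real (card (admissible f (Suc n) (pos f n)))"
    have weight: "grw_step_prob f n * c = c'" "0 < c"
      using entered_weight[OF Suc.hyps ent] by (simp_all add: c_def c'_def)
    have "mirror_path_prob f (Suc n) * c = mirror_path_prob f n * c'"
      using mirror_path_prob_Suc[OF Suc.hyps] by (simp add: c_def c'_def)
    also have "\<dots> = grw_path_prob f (Suc n) * c"
      using IH weight(1) by (simp add: grw_path_prob_Suc)
    finally have "grw_path_prob f (Suc n) = mirror_path_prob f (Suc n)"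
      using weight(2) by simp
    moreover have "path_invariant f (Suc n)"
      if "grw_path_prob f (Suc n) \<noteq> 0" "pos f (Suc n) \<noteq> (0, 0)"
      using path_invariant_step[OF Suc.hyps inv away that(2)] that(1) by (simp add: grw_path_prob_Suc)
    ultimately show ?thesis by simp
  qed
qed

theorem mainTheorem14:
  shows "measure grw_space
           {\<omega> \<in> space grw_space. \<exists>t>0. fst (grw_state \<omega> t) = (0, 0)}
       = measure mirror_space
           {x \<in> space mirror_space. \<exists>t>0. fst (mirror_state (fst x) (snd x) t) = (0, 0)}"
proof -
  have "(\<Sum>f\<in>first_return_paths n. grw_path_prob f n) = (\<Sum>f\<in>first_return_paths n. mirror_path_prob f n)" for n
    using path_probs_agree
    by (intro sum.cong) (auto simp: first_return_paths_def first_return_def)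
  then have "(\<lambda>n. \<Sum>f\<in>first_return_paths n. mirror_path_prob f n)
      sums measure grw_space {\<omega> \<in> space grw_space. \<exists>t>0. fst (grw_state \<omega> t) = (0, 0)}"
    using grw_return_sums by simp
  then show ?thesis using mirror_return_sums by (rule sums_unique2)
qed

end
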